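(* Fix $p$ with $\tfrac{1}{2}<p<1$ and put $r=\dfrac{1-p}{p}$. Define the sequence $(a_k)_{k\ge 0}$ by $a_0=0$ and $a_k=(1-p)+p\,a_{k-1}^2$ for $k\geq 1$. Then $\lim_{k\to\infty}a_k=r$, and the limit \[ \lim_{k\to\infty}\frac{r-a_k}{(2\,r\,p)^k} \] exists and satisfies \[ 0<\lim_{k\to\infty}\frac{r-a_k}{(2\,r\,p)^k}=r\prod_{j=0}^{\infty}\frac{r+a_j}{2r}<1 . \]
   Context: Here $2rp=2(1-p)$. This recurrence arises in the study of random Galton–Watson binary tree heights. *)

theory Defs
  imports "HOL-Analysis.Analysis"
begin

fun gw_seq :: "real \<Rightarrow> nat \<Rightarrow> real" where
  "gw_seq p 0 = 0"
| "gw_seq p (Suc k) = (1 - p) + p * (gw_seq p k)^2"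

end

theory Submission
  imports Defs
begin

text \<open>
  The limit \<open>r\<close> is the smaller fixed point of \<open>x \<mapsto> 1 - p + p x\<^sup>2\<close>, so the error
  \<open>e\<^sub>k = r - a\<^sub>k\<close> satisfies \<open>e\<^sub>k\<^sub>+\<^sub>1 = p (r + a\<^sub>k) e\<^sub>k\<close>. Since \<open>0 \<le> a\<^sub>k < r\<close>, each step
  contracts by at most \<open>q = 2 r p = 2 (1 - p) < 1\<close>, and telescoping gives
  \<open>e\<^sub>k / q\<^sup>k = r \<Prod>\<^sub>j\<^sub><\<^sub>k b\<^sub>j\<close> with \<open>b\<^sub>j = (r + a\<^sub>j) / (2 r) \<in> (0, 1]\<close>. As \<open>1 - b\<^sub>j = e\<^sub>j / (2 r) \<le> q\<^sup>j / 2\<close>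
  is summable, the product converges to a positive limit, which is at most
  its first factor \<open>b\<^sub>0 = 1/2\<close>; hence the limit is at most \<open>r / 2 < 1\<close>.
\<close>

lemma has_prod_pos_le_first:
  fixes b :: "nat \<Rightarrow> real"
  assumes pos: "\<And>j. 0 < b j" and le_1: "\<And>j. b j \<le> 1"
    and summable: "summable (\<lambda>j. 1 - b j)"
  obtains P where "b has_prod P" and "0 < P" and "P \<le> b 0"
proof
  have "summable (\<lambda>j. norm (b j - 1))"
    using summable le_1 by (simp add: abs_minus_commute)
  then have "convergent_prod b"
    by (intro abs_convergent_prod_imp_convergent_prod summable_imp_abs_convergent_prod)
  then show prod: "b has_prod prodinf b"
    by (rule convergent_prod_has_prod)
  then show "0 < prodinf b"
    using pos by (rule has_prod_pos)
  have "(\<lambda>j. if j = 0 then b 0 else 1) has_prod b 0"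
    using has_prod_finite[of "{0}" "\<lambda>j. if j = 0 then b 0 else 1"] by simp
  then show "prodinf b \<le> b 0"
    using has_prod_le[OF prod] pos le_1 by (simp add: less_imp_le)
qed

context
  fixes p r :: real
  assumes p_pos: "0 < p" and p_less_1: "p < 1"
  defines "r \<equiv> (1 - p) / p"
begin

lemma gw_fixed_point_pos: "0 < r"
  unfolding r_def using p_pos p_less_1 by simp

lemma gw_seq_error_Suc:
  "r - gw_seq p (Suc k) = p * (r + gw_seq p k) * (r - gw_seq p k)"
proof -
  have "1 - p + p * r\<^sup>2 = r"
    unfolding r_def using p_pos by (simp add: field_simps power2_eq_square)
  then have "r - gw_seq p (Suc k) = p * (r\<^sup>2 - (gw_seq p k)\<^sup>2)"
    by (simp add: algebra_simps)
  then show ?thesis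
    by (simp add: algebra_simps power2_eq_square)
qed

lemma gw_seq_nonneg: "0 \<le> gw_seq p k"
  using p_pos p_less_1 by (cases k) (auto intro!: add_nonneg_nonneg)

lemma gw_seq_less: "gw_seq p k < r"
proof (induction k)
  case 0
  show ?case using gw_fixed_point_pos by simp
next
  case (Suc k)
  have "0 < p * (r + gw_seq p k) * (r - gw_seq p k)"
    using Suc p_pos gw_fixed_point_pos gw_seq_nonneg[of k] by simp
  then show ?case
    using gw_seq_error_Suc[of k] by simp
qed

lemma gw_seq_error_le: "r - gw_seq p k \<le> r * (2 * r * p) ^ k"
proof (induction k)
  case 0
  show ?case by simp
next
  case (Suc k)
  have "r - gw_seq p (Suc k) = p * (r + gw_seq p k) * (r - gw_seq p k)"
    by (rule gw_seq_error_Suc)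
  also have "\<dots> \<le> (2 * r * p) * (r - gw_seq p k)"
    using gw_seq_less[of k] p_pos by (intro mult_right_mono) auto
  also have "\<dots> \<le> (2 * r * p) * (r * (2 * r * p) ^ k)"
    using Suc p_pos gw_fixed_point_pos by (intro mult_left_mono) auto
  finally show ?case
    by (simp add: algebra_simps)
qed

lemma gw_seq_error_eq_prod:
  "(r - gw_seq p k) / (2 * r * p) ^ k = r * (\<Prod>j<k. (r + gw_seq p j) / (2 * r))"
proof (induction k)
  case 0
  show ?case by simp
next
  case (Suc k)
  have "(r - gw_seq p (Suc k)) / (2 * r * p) ^ Suc k
      = (r + gw_seq p k) / (2 * r) * ((r - gw_seq p k) / (2 * r * p) ^ k)"
    unfolding gw_seq_error_Suc using p_pos gw_fixed_point_pos by (simp add: field_simps)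
  then show ?case
    using Suc by simp
qed

context
  assumes p_gt_half: "1/2 < p"
begin

lemma gw_contraction_less_1: "2 * r * p < 1"
  unfolding r_def using p_pos p_gt_half by simp

lemma gw_seq_tendsto: "gw_seq p \<longlonglongrightarrow> r"
proof -
  have bound_tendsto: "(\<lambda>k. r * (2 * r * p) ^ k) \<longlonglongrightarrow> 0"
    using gw_contraction_less_1 p_pos gw_fixed_point_pos
    by (intro tendsto_mult_right_zero LIMSEQ_power_zero) auto
  have "(\<lambda>k. r - gw_seq p k) \<longlonglongrightarrow> 0"
    by (rule tendsto_sandwich[OF _ _ tendsto_const bound_tendsto])
       (use gw_seq_less gw_seq_error_le in \<open>auto simp: less_imp_le\<close>)
  from tendsto_diff[OF tendsto_const[of r] this] show ?thesis
    by simp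
qed

lemma gw_factor_summable: "summable (\<lambda>j. 1 - (r + gw_seq p j) / (2 * r))"
proof (rule summable_comparison_test)
  show "summable (\<lambda>j. (2 * r * p) ^ j / 2)"
    using gw_contraction_less_1 p_pos gw_fixed_point_pos
    by (intro summable_divide summable_geometric) auto
  have "norm (1 - (r + gw_seq p j) / (2 * r)) \<le> (2 * r * p) ^ j / 2" for j
  proof -
    have "norm (1 - (r + gw_seq p j) / (2 * r)) = (r - gw_seq p j) / (2 * r)"
      using gw_seq_nonneg[of j] gw_seq_less[of j] gw_fixed_point_pos by (simp add: field_simps)
    also have "\<dots> \<le> r * (2 * r * p) ^ j / (2 * r)"
      using gw_seq_error_le[of j] gw_fixed_point_pos by (intro divide_right_mono) auto
    finally show ?thesis
      using gw_fixed_point_pos by simp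
  qed
  then show "\<exists>N. \<forall>j\<ge>N. norm (1 - (r + gw_seq p j) / (2 * r)) \<le> (2 * r * p) ^ j / 2"
    by blast
qed

lemma gw_factor_has_prod:
  obtains P where "(\<lambda>j. (r + gw_seq p j) / (2 * r)) has_prod P" and "0 < P" and "P \<le> 1/2"
proof -
  have pos: "0 < (r + gw_seq p j) / (2 * r)" and le_1: "(r + gw_seq p j) / (2 * r) \<le> 1" for j
    using gw_seq_nonneg[of j] gw_seq_less[of j] gw_fixed_point_pos by auto
  obtain P
    where "(\<lambda>j. (r + gw_seq p j) / (2 * r)) has_prod P" "0 < P" "P \<le> (r + gw_seq p 0) / (2 * r)"
    by (rule has_prod_pos_le_first[OF pos le_1 gw_factor_summable])
  with that show ?thesis
    using gw_fixed_point_pos by simp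
qed

end

end

theorem mainTheorem1:
  fixes p :: real
  assumes "1/2 < p" and "p < 1"
  defines "r \<equiv> (1 - p) / p"
  shows "gw_seq p \<longlonglongrightarrow> r \<and>
         (\<exists>L P. (\<lambda>k. (r - gw_seq p k) / (2 * r * p) ^ k) \<longlonglongrightarrow> L
            \<and> (\<lambda>j. (r + gw_seq p j) / (2 * r)) has_prod P
            \<and> 0 < L \<and> L = r * P \<and> L < 1)"
proof -
  have p_pos: "0 < p" using assms(1) by simp
  note p_range = p_pos assms(2) assms(1)
  have r_pos: "0 < r" and r_less_1: "r < 1"
    unfolding r_def using assms by (auto simp: field_simps)
  obtain P where prod: "(\<lambda>j. (r + gw_seq p j) / (2 * r)) has_prod P"
    and "0 < P" and "P \<le> 1/2"
    using gw_factor_has_prod[OF p_range, folded r_def] by blast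
  have "(\<lambda>k. (r - gw_seq p k) / (2 * r * p) ^ k) \<longlonglongrightarrow> r * P"
    unfolding gw_seq_error_eq_prod[OF p_range(1,2), folded r_def]
    by (intro tendsto_mult_left has_prod_imp_tendsto' prod)
  moreover have "0 < r * P" and "r * P < 1"
    using \<open>0 < P\<close> \<open>P \<le> 1/2\<close> r_pos r_less_1 by (auto intro: order.strict_trans1[of _ "r * (1/2)"])
  ultimately show ?thesis
    using gw_seq_tendsto[OF p_range, folded r_def] prod by blast
qed

end
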